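(* Let $k\ge0$ with $k\equiv0\pmod6$ and let $j\ge1$ be an integer. Then $b_{jk}=\sum_{i=0}^{j-1}3^{\,j-i-1}\binom{j}{j-i}b_k^{\,j-i}$.
   Context: For $n=3$, define nonnegative integers $a_r,b_r,c_r$ ($r\ge0$) by $a_0=1,b_0=0,c_0=0$ and $a_r=a_{r-1}+c_{r-1}$, $b_r=b_{r-1}+a_{r-1}$, $c_r=c_{r-1}+b_{r-1}$. Equivalently, for the Ducci map $D(x_1,x_2,x_3)=(x_1+x_2,x_2+x_3,x_3+x_1)$, one has $D^r(x_1,x_2,x_3)=(a_rx_1+b_rx_2+c_rx_3,\;c_rx_1+a_rx_2+b_rx_3,\;b_rx_1+c_rx_2+a_rx_3)$. *)

theory Defs
  imports Main
begin

fun abc :: "nat \<Rightarrow> nat \<times> nat \<times> nat" where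
  "abc 0 = (1, 0, 0)"
| "abc (Suc r) = (case abc r of (a, b, c) \<Rightarrow> (a + c, b + a, c + b))"

definition ducci_a :: "nat \<Rightarrow> nat" where "ducci_a r = fst (abc r)"
definition ducci_b :: "nat \<Rightarrow> nat" where "ducci_b r = fst (snd (abc r))"
definition ducci_c :: "nat \<Rightarrow> nat" where "ducci_c r = snd (snd (abc r))"

end

theory Submission
  imports Defs
begin

text \<open>
  The triple \<open>abc r\<close> lists the coefficients of \<open>(1 + x)\<^sup>r\<close> in the group semiring
  \<open>\<nat>[x]/(x\<^sup>3 - 1)\<close>, so \<open>abc\<close> turns addition of exponents into the (circulant)
  multiplication of that ring. Put \<open>s = 1 + x + x\<^sup>2\<close>; then \<open>(1 + x)\<^sup>6 = 1 + 21 s\<close>, and since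
  \<open>s\<^sup>2 = 3 s\<close> the elements \<open>1 + b s\<close> multiply like the numbers \<open>3 b + 1\<close>. Hence
  \<open>3 b\<^sub>j\<^sub>k + 1 = (3 b\<^sub>k + 1)\<^sup>j\<close> whenever \<open>6\<close> divides \<open>k\<close>, and the binomial theorem gives the
  formula.
\<close>

fun circ_mul :: "nat \<times> nat \<times> nat \<Rightarrow> nat \<times> nat \<times> nat \<Rightarrow> nat \<times> nat \<times> nat" where
  "circ_mul (a, b, c) (a', b', c') =
     (a * a' + b * c' + c * b', a * b' + b * a' + c * c', a * c' + b * b' + c * a')"

lemma abc_add: "abc (m + n) = circ_mul (abc m) (abc n)"
proof (induction n)
  case 0
  show ?case by (cases "abc m") auto
next
  case (Suc n)
  obtain a b c where "abc m = (a, b, c)" by (cases "abc m") auto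
  moreover obtain a' b' c' where "abc n = (a', b', c')" by (cases "abc n") auto
  ultimately show ?case using Suc by (simp add: algebra_simps)
qed

lemma circ_mul_one_plus_diag:
  "circ_mul (b + 1, b, b) (c + 1, c, c) = (d + 1, d, d)" if "d = 3 * b * c + b + c"
  using that by (simp add: algebra_simps)

lemma abc_diag_eq_ducci_b:
  assumes "abc r = (b + 1, b, b)"
  shows "abc r = (ducci_b r + 1, ducci_b r, ducci_b r)"
  using assms by (simp add: ducci_b_def)

lemma abc_mult_6: "abc (6 * q) = (ducci_b (6 * q) + 1, ducci_b (6 * q), ducci_b (6 * q))"
proof (induction q)
  case 0
  show ?case by (simp add: ducci_b_def)
next
  case (Suc q)
  have "abc 6 = (21 + 1, 21, 21)" by (simp add: numeral_eq_Suc)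
  then have "abc (6 * q + 6) = circ_mul (abc (6 * q)) (21 + 1, 21, 21)"
    by (simp only: abc_add)
  also have "\<dots> = (3 * ducci_b (6 * q) * 21 + ducci_b (6 * q) + 21 + 1,
      3 * ducci_b (6 * q) * 21 + ducci_b (6 * q) + 21, 3 * ducci_b (6 * q) * 21 + ducci_b (6 * q) + 21)"
    by (subst Suc, rule circ_mul_one_plus_diag) simp
  finally show ?case
    by (metis abc_diag_eq_ducci_b add.commute mult_Suc_right)
qed

lemma ducci_b_mult:
  assumes "k mod 6 = 0"
  shows "3 * ducci_b (j * k) + 1 = (3 * ducci_b k + 1) ^ j"
proof (induction j)
  case 0
  show ?case by (simp add: ducci_b_def)
next
  case (Suc j)
  obtain q where "k = 6 * q" using assms by auto
  then have diag: "abc (i * k) = (ducci_b (i * k) + 1, ducci_b (i * k), ducci_b (i * k))" for i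
    by (metis abc_mult_6 mult.left_commute)
  define b where "b = ducci_b (j * k)"
  define c where "c = ducci_b k"
  have "abc (j * k + k) = circ_mul (b + 1, b, b) (c + 1, c, c)"
    using diag[of j] diag[of 1] by (simp only: abc_add b_def c_def mult_1)
  also have "\<dots> = (3 * b * c + b + c + 1, 3 * b * c + b + c, 3 * b * c + b + c)"
    by (rule circ_mul_one_plus_diag) simp
  finally have "ducci_b (Suc j * k) = 3 * b * c + b + c"
    by (simp add: ducci_b_def add.commute)
  then have "3 * ducci_b (Suc j * k) + 1 = (3 * b + 1) * (3 * c + 1)"
    by (simp add: algebra_simps)
  then show ?case using Suc unfolding b_def c_def by (metis mult.commute power_Suc)
qed

lemma power_mult_add_one_expand:
  fixes a b :: "'a::comm_semiring_1"
  assumes "j \<ge> 1"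
  shows "(a * b + 1) ^ j
    = 1 + a * (\<Sum>i = 0..j - 1. a ^ (j - i - 1) * of_nat (j choose (j - i)) * b ^ (j - i))"
proof -
  have "a * (\<Sum>i = 0..j - 1. a ^ (j - i - 1) * of_nat (j choose (j - i)) * b ^ (j - i))
      = (\<Sum>i = 0..j - 1. of_nat (j choose (j - i)) * (a * b) ^ (j - i))"
    unfolding sum_distrib_left
  proof (rule sum.cong[OF refl])
    fix i assume "i \<in> {0..j - 1}"
    then have "j - i = Suc (j - i - 1)" using assms by auto
    then show "a * (a ^ (j - i - 1) * of_nat (j choose (j - i)) * b ^ (j - i))
        = of_nat (j choose (j - i)) * (a * b) ^ (j - i)"
      by (metis mult.assoc mult.left_commute power_Suc power_mult_distrib)
  qed
  also have "\<dots> = (\<Sum>m = 1..j. of_nat (j choose m) * (a * b) ^ m)"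
    by (rule sum.reindex_bij_witness[where i="\<lambda>m. j - m" and j="\<lambda>i. j - i"])
      (use assms in auto)
  also have "1 + \<dots> = (\<Sum>m = 0..j. of_nat (j choose m) * (a * b) ^ m)"
    by (simp add: sum.atLeast_Suc_atMost)
  also have "\<dots> = (a * b + 1) ^ j"
    using binomial_ring[of "a * b" 1 j] by (simp add: atLeast0AtMost mult.commute)
  finally show ?thesis ..
qed

theorem lemma4p5:
  fixes k j :: nat
  assumes "k mod 6 = 0" and "j \<ge> 1"
  shows "ducci_b (j * k) = (\<Sum>i = 0..j - 1. 3 ^ (j - i - 1) * (j choose (j - i)) * ducci_b k ^ (j - i))"
  using ducci_b_mult[OF assms(1), of j] power_mult_add_one_expand[OF assms(2), of 3 "ducci_b k"]
  by simp

end
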